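(* For every command $c$ and store $\sigma$ of the While-language: $(c,\sigma)\Rightarrow^\infty$ if and only if $(c,\sigma)\Downarrow^{co}\mathsf{div}$.
   Context: While-language syntax: variables $x$ range over a countably infinite set $\mathit{Var}$; $n$ ranges over natural numbers; values are $v ::= \mathsf{null}\mid n$ ($\mathsf{null}$ distinct from every natural number); expressions are $e ::= v\mid x\mid e_1\oplus e_2$ with $\oplus\in\{+,-,*\}$, where $\oplus(n_1,n_2)$ is the result of the operation on naturals; commands are $c ::= \mathsf{skip}\mid\mathsf{alloc}\ x\mid x:=e\mid c_1;c_2\mid \mathsf{if}\ e\ c_1\ c_2\mid\mathsf{while}\ e\ c$. A store $\sigma$ is a finite partial map from $\mathit{Var}$ to values, with domain $\mathrm{dom}(\sigma)$, lookup $\sigma(x)$, update $\sigma[x\mapsto v]$. Expression evaluation $(e,\sigma)\Rightarrow_E v$ is the least relation with: $(v,\sigma)\Rightarrow_E v$; $(x,\sigma)\Rightarrow_E\sigma(x)$ if $x\in\mathrm{dom}(\sigma)$; if $(e_1,\sigma)\Rightarrow_E n_1$ and $(e_2,\sigma)\Rightarrow_E n_2$ with $n_1,n_2$ naturals then $(e_1\oplus e_2,\sigma)\Rightarrow_E\oplus(n_1,n_2)$. Big-step relation $(c,\sigma)\Rightarrow_B\sigma'$ is the least relation with: $(\mathsf{skip},\sigma)\Rightarrow_B\sigma$; $(\mathsf{alloc}\ x,\sigma)\Rightarrow_B\sigma[x\mapsto\mathsf{null}]$ if $x\notin\mathrm{dom}(\sigma)$; $(x:=e,\sigma)\Rightarrow_B\sigma[x\mapsto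 v]$ if $x\in\mathrm{dom}(\sigma)$ and $(e,\sigma)\Rightarrow_E v$; $(c_1;c_2,\sigma)\Rightarrow_B\sigma''$ if $(c_1,\sigma)\Rightarrow_B\sigma'$ and $(c_2,\sigma')\Rightarrow_B\sigma''$; $(\mathsf{if}\ e\ c_1\ c_2,\sigma)\Rightarrow_B\sigma'$ if $(e,\sigma)\Rightarrow_E v$, $v\ne0$, $(c_1,\sigma)\Rightarrow_B\sigma'$; $(\mathsf{if}\ e\ c_1\ c_2,\sigma)\Rightarrow_B\sigma'$ if $(e,\sigma)\Rightarrow_E0$, $(c_2,\sigma)\Rightarrow_B\sigma'$; $(\mathsf{while}\ e\ c,\sigma)\Rightarrow_B\sigma''$ if $(e,\sigma)\Rightarrow_E v$, $v\ne0$, $(c,\sigma)\Rightarrow_B\sigma'$, $(\mathsf{while}\ e\ c,\sigma')\Rightarrow_B\sigma''$; $(\mathsf{while}\ e\ c,\sigma)\Rightarrow_B\sigma$ if $(e,\sigma)\Rightarrow_E0$. The big-step divergence predicate $(c,\sigma)\Rightarrow^\infty$ is the greatest predicate such that every element is the conclusion of an instance of one of these rules whose $\Rightarrow^\infty$-premises are in it: $(c_1,\sigma)\Rightarrow^\infty$ gives $(c_1;c_2,\sigma)\Rightarrow^\infty$; $(c_1,\sigma)\Rightarrow_B\sigma'$ and $(c_2,\sigma')\Rightarrow^\infty$ give $(c_1;c_2,\sigma)\Rightarrow^\infty$; $(e,\sigma)\Rightarrow_E v$, $v\ne0$, $(c_1,\sigma)\Rightarrow^\infty$ give $(\mathsf{if}\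 e\ c_1\ c_2,\sigma)\Rightarrow^\infty$; $(e,\sigma)\Rightarrow_E0$, $(c_2,\sigma)\Rightarrow^\infty$ give $(\mathsf{if}\ e\ c_1\ c_2,\sigma)\Rightarrow^\infty$; $(e,\sigma)\Rightarrow_E v$, $v\ne0$, $(c,\sigma)\Rightarrow^\infty$ give $(\mathsf{while}\ e\ c,\sigma)\Rightarrow^\infty$; $(e,\sigma)\Rightarrow_E v$, $v\ne0$, $(c,\sigma)\Rightarrow_B\sigma'$, $(\mathsf{while}\ e\ c,\sigma')\Rightarrow^\infty$ give $(\mathsf{while}\ e\ c,\sigma)\Rightarrow^\infty$. Pretty-big-step semantics: outcomes $o ::= \mathsf{conv}\ \sigma\mid\mathsf{div}$; semantic commands $C ::= c\mid\mathsf{assign2}\ x\ v\mid\mathsf{seq2}\ o\ c\mid\mathsf{if2}\ v\ c\ c\mid\mathsf{while2}\ v\ e\ c\mid\mathsf{while3}\ o\ e\ c$. The rules for judgments $(C,\sigma)\Downarrow o$ are: $(\mathsf{skip},\sigma)\Downarrow\mathsf{conv}\ \sigma$; $(\mathsf{alloc}\ x,\sigma)\Downarrow\mathsf{conv}\ \sigma[x\mapsto\mathsf{null}]$ if $x\notin\mathrm{dom}(\sigma)$; $(x:=e,\sigma)\Downarrow o$ if $(e,\sigma)\Rightarrow_E v$ and $(\mathsf{assign2}\ x\ v,\sigma)\Downarrow o$; $(\mathsf{assign2}\ x\ v,\sigma)\Downarrow\mathsf{conv}\ \sigma[x\mapsto v]$ if $x\in\mathrm{dom}(\sigma)$; $(c_1;c_2,\sigma)\Downarrow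 o$ if $(c_1,\sigma)\Downarrow o_1$ and $(\mathsf{seq2}\ o_1\ c_2,\sigma)\Downarrow o$; $(\mathsf{seq2}\ (\mathsf{conv}\ \sigma)\ c,\sigma_0)\Downarrow o$ if $(c,\sigma)\Downarrow o$; $(\mathsf{if}\ e\ c_1\ c_2,\sigma)\Downarrow o$ if $(e,\sigma)\Rightarrow_E v$ and $(\mathsf{if2}\ v\ c_1\ c_2,\sigma)\Downarrow o$; $(\mathsf{if2}\ v\ c_1\ c_2,\sigma)\Downarrow o_1$ if $v\ne0$ and $(c_1,\sigma)\Downarrow o_1$; $(\mathsf{if2}\ 0\ c_1\ c_2,\sigma)\Downarrow o_2$ if $(c_2,\sigma)\Downarrow o_2$; $(\mathsf{while}\ e\ c,\sigma)\Downarrow o$ if $(e,\sigma)\Rightarrow_E v$ and $(\mathsf{while2}\ v\ e\ c,\sigma)\Downarrow o$; $(\mathsf{while2}\ v\ e\ c,\sigma)\Downarrow o'$ if $v\ne0$, $(c,\sigma)\Downarrow o$ and $(\mathsf{while3}\ o\ e\ c,\sigma)\Downarrow o'$; $(\mathsf{while2}\ 0\ e\ c,\sigma)\Downarrow\mathsf{conv}\ \sigma$; $(\mathsf{while3}\ (\mathsf{conv}\ \sigma)\ e\ c,\sigma_0)\Downarrow o$ if $(\mathsf{while}\ e\ c,\sigma)\Downarrow o$; $(\mathsf{seq2}\ \mathsf{div}\ c_2,\sigma)\Downarrow\mathsf{div}$; $(\mathsf{while3}\ \mathsf{div}\ e\ c,\sigma)\Downarrow\mathsf{div}$. $\Downarrow^{co}$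 denotes the coinductive interpretation of these same rules: the greatest relation such that every element is the conclusion of a rule instance whose $\Downarrow$-premises lie in it ($\Rightarrow_E$ premises keep their meaning). *)

theory Defs
  imports Main
begin

type_synonym vname = nat  (* Var: countably infinite *)

datatype val = Null | Nat nat

datatype binop = Plus | Minus | Times

datatype expr = V val | Var vname | BinOp binop expr expr

datatype com = Skip | Alloc vname | Assign vname expr | Seq com com
  | If expr com com | While expr com

type_synonym store = "vname \<rightharpoonup> val"

fun apply_op :: "binop \<Rightarrow> nat \<Rightarrow> nat \<Rightarrow> nat" where
  "apply_op Plus a b = a + b"
| "apply_op Minus a b = a - b"
| "apply_op Times a b = a * b"

inductive evalE :: "expr \<Rightarrow> store \<Rightarrow> val \<Rightarrow> bool" where
  "evalE (V v) \<sigma> v"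
| "\<sigma> x = Some v \<Longrightarrow> evalE (Var x) \<sigma> v"
| "evalE e1 \<sigma> (Nat n1) \<Longrightarrow> evalE e2 \<sigma> (Nat n2) \<Longrightarrow>
     evalE (BinOp op e1 e2) \<sigma> (Nat (apply_op op n1 n2))"

inductive bigstep :: "com \<Rightarrow> store \<Rightarrow> store \<Rightarrow> bool" where
  "bigstep Skip \<sigma> \<sigma>"
| "x \<notin> dom \<sigma> \<Longrightarrow> bigstep (Alloc x) \<sigma> (\<sigma>(x \<mapsto> Null))"
| "x \<in> dom \<sigma> \<Longrightarrow> evalE e \<sigma> v \<Longrightarrow> bigstep (Assign x e) \<sigma> (\<sigma>(x \<mapsto> v))"
| "bigstep c1 \<sigma> \<sigma>' \<Longrightarrow> bigstep c2 \<sigma>' \<sigma>'' \<Longrightarrow> bigstep (Seq c1 c2) \<sigma> \<sigma>''"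
| "evalE e \<sigma> v \<Longrightarrow> v \<noteq> Nat 0 \<Longrightarrow> bigstep c1 \<sigma> \<sigma>' \<Longrightarrow> bigstep (If e c1 c2) \<sigma> \<sigma>'"
| "evalE e \<sigma> (Nat 0) \<Longrightarrow> bigstep c2 \<sigma> \<sigma>' \<Longrightarrow> bigstep (If e c1 c2) \<sigma> \<sigma>'"
| "evalE e \<sigma> v \<Longrightarrow> v \<noteq> Nat 0 \<Longrightarrow> bigstep c \<sigma> \<sigma>' \<Longrightarrow> bigstep (While e c) \<sigma>' \<sigma>''
     \<Longrightarrow> bigstep (While e c) \<sigma> \<sigma>''"
| "evalE e \<sigma> (Nat 0) \<Longrightarrow> bigstep (While e c) \<sigma> \<sigma>"

coinductive bigdiv :: "com \<Rightarrow> store \<Rightarrow> bool" where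
  "bigdiv c1 \<sigma> \<Longrightarrow> bigdiv (Seq c1 c2) \<sigma>"
| "bigstep c1 \<sigma> \<sigma>' \<Longrightarrow> bigdiv c2 \<sigma>' \<Longrightarrow> bigdiv (Seq c1 c2) \<sigma>"
| "evalE e \<sigma> v \<Longrightarrow> v \<noteq> Nat 0 \<Longrightarrow> bigdiv c1 \<sigma> \<Longrightarrow> bigdiv (If e c1 c2) \<sigma>"
| "evalE e \<sigma> (Nat 0) \<Longrightarrow> bigdiv c2 \<sigma> \<Longrightarrow> bigdiv (If e c1 c2) \<sigma>"
| "evalE e \<sigma> v \<Longrightarrow> v \<noteq> Nat 0 \<Longrightarrow> bigdiv c \<sigma> \<Longrightarrow> bigdiv (While e c) \<sigma>"
| "evalE e \<sigma> v \<Longrightarrow> v \<noteq> Nat 0 \<Longrightarrow> bigstep c \<sigma> \<sigma>' \<Longrightarrow> bigdiv (While e c) \<sigma>'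
     \<Longrightarrow> bigdiv (While e c) \<sigma>"

datatype outcome = Conv store | Div

datatype scom = Cmd com | Assign2 vname val | Seq2 outcome com
  | If2 val com com | While2 val expr com | While3 outcome expr com

coinductive pbs_co :: "scom \<Rightarrow> store \<Rightarrow> outcome \<Rightarrow> bool" where
  "pbs_co (Cmd Skip) \<sigma> (Conv \<sigma>)"
| "x \<notin> dom \<sigma> \<Longrightarrow> pbs_co (Cmd (Alloc x)) \<sigma> (Conv (\<sigma>(x \<mapsto> Null)))"
| "evalE e \<sigma> v \<Longrightarrow> pbs_co (Assign2 x v) \<sigma> r \<Longrightarrow> pbs_co (Cmd (Assign x e)) \<sigma> r"
| "x \<in> dom \<sigma> \<Longrightarrow> pbs_co (Assign2 x v) \<sigma> (Conv (\<sigma>(x \<mapsto> v)))"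
| "pbs_co (Cmd c1) \<sigma> r1 \<Longrightarrow> pbs_co (Seq2 r1 c2) \<sigma> r \<Longrightarrow> pbs_co (Cmd (Seq c1 c2)) \<sigma> r"
| "pbs_co (Cmd c) \<sigma> r \<Longrightarrow> pbs_co (Seq2 (Conv \<sigma>) c) \<sigma>0 r"
| "evalE e \<sigma> v \<Longrightarrow> pbs_co (If2 v c1 c2) \<sigma> r \<Longrightarrow> pbs_co (Cmd (If e c1 c2)) \<sigma> r"
| "v \<noteq> Nat 0 \<Longrightarrow> pbs_co (Cmd c1) \<sigma> r1 \<Longrightarrow> pbs_co (If2 v c1 c2) \<sigma> r1"
| "pbs_co (Cmd c2) \<sigma> r2 \<Longrightarrow> pbs_co (If2 (Nat 0) c1 c2) \<sigma> r2"
| "evalE e \<sigma> v \<Longrightarrow> pbs_co (While2 v e c) \<sigma> r \<Longrightarrow> pbs_co (Cmd (While e c)) \<sigma> r"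
| "v \<noteq> Nat 0 \<Longrightarrow> pbs_co (Cmd c) \<sigma> r \<Longrightarrow> pbs_co (While3 r e c) \<sigma> r'
     \<Longrightarrow> pbs_co (While2 v e c) \<sigma> r'"
| "pbs_co (While2 (Nat 0) e c) \<sigma> (Conv \<sigma>)"
| "pbs_co (Cmd (While e c)) \<sigma> r \<Longrightarrow> pbs_co (While3 (Conv \<sigma>) e c) \<sigma>0 r"
| "pbs_co (Seq2 Div c2) \<sigma> Div"
| "pbs_co (While3 Div e c) \<sigma> Div"

end

theory Submission
  imports Defs
begin

text \<open>From \<open>bigdiv\<close> to \<open>pbs_co \<dots> Div\<close>, the
invariant is \<open>bigdiv\<close> extended to the intermediate semantic commands; the terminating
premises of \<open>bigdiv\<close> are supplied by the (inductive) embedding of \<open>bigstep\<close> into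
\<open>pbs_co\<close>. Conversely, \<open>pbs_co\<close> is deterministic on terminating runs, so a command
related to \<open>Div\<close> cannot terminate; the invariant is then ``related to some outcome and
not terminating'', and at each sequencing point either the first part diverges or it
terminates and hands the divergence on to the rest.\<close>

inductive_cases pbs_co_CmdE:
  "pbs_co (Cmd Skip) s r" "pbs_co (Cmd (Alloc x)) s r" "pbs_co (Cmd (Assign x e)) s r"
  "pbs_co (Cmd (Seq c1 c2)) s r" "pbs_co (Cmd (If e c1 c2)) s r" "pbs_co (Cmd (While e c)) s r"
inductive_cases pbs_co_Assign2E: "pbs_co (Assign2 x v) s r"
inductive_cases pbs_co_Seq2E: "pbs_co (Seq2 r1 c) s r"
inductive_cases pbs_co_If2E: "pbs_co (If2 v c1 c2) s r"
inductive_cases pbs_co_While2E: "pbs_co (While2 v e c) s r"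
inductive_cases pbs_co_While3E: "pbs_co (While3 r1 e c) s r"

lemma pbs_co_Seq2_iff [simp]:
  "pbs_co (Seq2 Div c) s r \<longleftrightarrow> r = Div"
  "pbs_co (Seq2 (Conv s') c) s r \<longleftrightarrow> pbs_co (Cmd c) s' r"
  by (auto elim: pbs_co_Seq2E intro: pbs_co.intros)

lemma pbs_co_While3_iff [simp]:
  "pbs_co (While3 Div e c) s r \<longleftrightarrow> r = Div"
  "pbs_co (While3 (Conv s') e c) s r \<longleftrightarrow> pbs_co (Cmd (While e c)) s' r"
  by (auto elim: pbs_co_While3E intro: pbs_co.intros)

lemma pbs_co_If2_iff [simp]:
  "pbs_co (If2 v c1 c2) s r \<longleftrightarrow> (if v = Nat 0 then pbs_co (Cmd c2) s r else pbs_co (Cmd c1) s r)"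
  by (auto elim: pbs_co_If2E intro: pbs_co.intros)

lemma pbs_co_While2_iff [simp]:
  "pbs_co (While2 v e c) s r \<longleftrightarrow>
     (if v = Nat 0 then r = Conv s else \<exists>r1. pbs_co (Cmd c) s r1 \<and> pbs_co (While3 r1 e c) s r)"
  by (auto elim: pbs_co_While2E intro: pbs_co.intros)

lemma pbs_co_Assign2_iff [simp]:
  "pbs_co (Assign2 x v) s r \<longleftrightarrow> x \<in> dom s \<and> r = Conv (s(x \<mapsto> v))"
  by (auto elim: pbs_co_Assign2E intro: pbs_co.intros)

lemma evalE_deterministic: "evalE e s v \<Longrightarrow> evalE e s v' \<Longrightarrow> v' = v"
proof (induction arbitrary: v' rule: evalE.induct)
  case (3 e1 s n1 e2 n2 op)
  then show ?case by (auto elim!: evalE.cases[of "BinOp op e1 e2"])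
qed (auto elim: evalE.cases)

lemma bigstep_imp_pbs_co: "bigstep c s s' \<Longrightarrow> pbs_co (Cmd c) s (Conv s')"
  by (induction rule: bigstep.induct) (blast intro: pbs_co.intros)+

lemma pbs_co_Cmd_eq_bigstep:
  "bigstep c s s' \<Longrightarrow> pbs_co (Cmd c) s r \<Longrightarrow> r = Conv s'"
proof (induction arbitrary: r rule: bigstep.induct)
qed (elim pbs_co_CmdE; fastforce dest: evalE_deterministic)+

fun scom_diverges :: "scom \<Rightarrow> store \<Rightarrow> bool" where
  "scom_diverges (Cmd c) s = bigdiv c s"
| "scom_diverges (Assign2 x v) s = False"
| "scom_diverges (Seq2 Div c) s = True"
| "scom_diverges (Seq2 (Conv s') c) s = bigdiv c s'"
| "scom_diverges (If2 v c1 c2) s = (if v = Nat 0 then bigdiv c2 s else bigdiv c1 s)"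
| "scom_diverges (While2 v e c) s =
     (v \<noteq> Nat 0 \<and> (bigdiv c s \<or> (\<exists>s'. bigstep c s s' \<and> bigdiv (While e c) s')))"
| "scom_diverges (While3 Div e c) s = True"
| "scom_diverges (While3 (Conv s') e c) s = bigdiv (While e c) s'"

lemma scom_diverges_imp_pbs_co_Div: "scom_diverges S s \<Longrightarrow> pbs_co S s Div"
proof (coinduction arbitrary: S s rule: pbs_co.coinduct)
  case (pbs_co S s)
  then show ?case
  proof (cases "(S, s)" rule: scom_diverges.cases)
    case (1 c)
    with pbs_co have S: "S = Cmd c" and "bigdiv c s" by simp_all
    from \<open>bigdiv c s\<close> show ?thesis
    proof cases
      case (1 c1 c2)
      then show ?thesis using S by simp (rule exI[of _ Div], simp)
    next
      case (2 c1 s' c2)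
      then show ?thesis using S by simp (rule exI[of _ "Conv s'"], simp add: bigstep_imp_pbs_co)
    next
      case (3 e v c1 c2)
      then show ?thesis using S by simp (rule exI[of _ v], simp)
    next
      case (4 e c2 c1)
      then show ?thesis using S by simp (rule exI[of _ "Nat 0"], simp)
    next
      case (5 e v c')
      then show ?thesis using S by simp (rule exI[of _ v], simp)
    next
      case (6 e v c' s')
      then show ?thesis using S by simp (rule exI[of _ v], auto)
    qed
  next
    case (6 v e c)
    with pbs_co have S: "S = While2 v e c" by simp
    from 6 pbs_co consider "v \<noteq> Nat 0" "bigdiv c s"
      | s' where "v \<noteq> Nat 0" "bigstep c s s'" "bigdiv (While e c) s'"
      by auto
    then show ?thesis
    proof cases
      case 1
      then show ?thesis using S by simp (rule exI[of _ Div], simp)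
    next
      case (2 s')
      then show ?thesis using S by simp (rule exI[of _ "Conv s'"], simp add: bigstep_imp_pbs_co)
    qed
  qed (use pbs_co in \<open>simp_all split: if_splits\<close>)
qed

text \<open>The outcome \<open>r\<close> is arbitrary here because the coinductive rules also relate
diverging commands to \<open>Conv\<close> outcomes (e.g.\ an infinite loop to every store), so only
nontermination, not the outcome \<open>Div\<close>, is inherited by the subcommands.\<close>

lemma pbs_co_nonterminating_imp_bigdiv:
  assumes "pbs_co (Cmd c) s r" and "\<nexists>s'. bigstep c s s'"
  shows "bigdiv c s"
  using assms
proof (coinduction arbitrary: c s r rule: bigdiv.coinduct)
  case (bigdiv c s r)
  show ?case
  proof (cases c)
    case (Seq c1 c2)
    with bigdiv obtain r1 where c1: "pbs_co (Cmd c1) s r1" and c2: "pbs_co (Seq2 r1 c2) s r"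
      by (auto elim: pbs_co_CmdE)
    show ?thesis
    proof (cases "\<exists>s'. bigstep c1 s s'")
      case True
      then obtain s' where "bigstep c1 s s'" ..
      moreover from this c1 have "r1 = Conv s'" by (rule pbs_co_Cmd_eq_bigstep)
      with c2 have "pbs_co (Cmd c2) s' r" by simp
      moreover from \<open>bigstep c1 s s'\<close> bigdiv Seq have "\<nexists>s''. bigstep c2 s' s''"
        by (auto intro: bigstep.intros)
      ultimately show ?thesis
        using Seq by force
    next
      case False
      with c1 Seq show ?thesis by auto
    qed
  next
    case (If e c1 c2)
    with bigdiv obtain v where v: "evalE e s v" and "pbs_co (If2 v c1 c2) s r"
      by (auto elim: pbs_co_CmdE)
    then consider "v \<noteq> Nat 0" "pbs_co (Cmd c1) s r" | "v = Nat 0" "pbs_co (Cmd c2) s r"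
      by (auto split: if_splits)
    then show ?thesis
    proof cases
      case 1
      moreover from this v bigdiv If have "\<nexists>s'. bigstep c1 s s'"
        by (auto intro: bigstep.intros)
      ultimately show ?thesis using If v by force
    next
      case 2
      moreover from this v bigdiv If have "\<nexists>s'. bigstep c2 s s'"
        by (auto intro: bigstep.intros)
      ultimately show ?thesis using If v by force
    qed
  next
    case (While e c')
    with bigdiv obtain v where v: "evalE e s v" and "pbs_co (While2 v e c') s r"
      by (auto elim: pbs_co_CmdE)
    show ?thesis
    proof (cases "v = Nat 0")
      case True
      with v bigdiv While show ?thesis by (auto intro: bigstep.intros)
    next
      case False
      with \<open>pbs_co (While2 v e c') s r\<close> obtain r1
        where body: "pbs_co (Cmd c') s r1" and loop: "pbs_co (While3 r1 e c') s r"
        by auto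
      show ?thesis
      proof (cases "\<exists>s'. bigstep c' s s'")
        case True
        then obtain s' where "bigstep c' s s'" ..
        moreover from this body have "r1 = Conv s'" by (rule pbs_co_Cmd_eq_bigstep)
        with loop have "pbs_co (Cmd (While e c')) s' r" by simp
        moreover from \<open>bigstep c' s s'\<close> bigdiv While v \<open>v \<noteq> Nat 0\<close>
        have "\<nexists>s''. bigstep (While e c') s' s''"
          by (auto intro: bigstep.intros)
        ultimately show ?thesis
          using While v \<open>v \<noteq> Nat 0\<close> by force
      next
        case False
        with body v \<open>v \<noteq> Nat 0\<close> While show ?thesis by auto
      qed
    qed
  qed (use bigdiv in \<open>force elim!: pbs_co_CmdE intro: bigstep.intros domI\<close>)+
qed

theorem theorem13:
  fixes c :: com and \<sigma> :: store
  assumes "finite (dom \<sigma>)"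
  shows "bigdiv c \<sigma> \<longleftrightarrow> pbs_co (Cmd c) \<sigma> Div"
proof
  assume "bigdiv c \<sigma>"
  then show "pbs_co (Cmd c) \<sigma> Div"
    using scom_diverges_imp_pbs_co_Div[of "Cmd c"] by simp
next
  assume div: "pbs_co (Cmd c) \<sigma> Div"
  then have "\<nexists>\<sigma>'. bigstep c \<sigma> \<sigma>'"
    using pbs_co_Cmd_eq_bigstep by blast
  with div show "bigdiv c \<sigma>" by (rule pbs_co_nonterminating_imp_bigdiv)
qed

end
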